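(* $\mathrm{1DPD}\not\subseteq\mathrm{1N}$.
   Context: A family of promise decision problems over a fixed alphabet $\Sigma$ is $\mathcal{L}=\{(L^{(+)}_n,L^{(-)}_n)\}_{n\in\mathbb{N}}$ with $L^{(+)}_n,L^{(-)}_n\subseteq\Sigma^*$ disjoint; a family of machines $\{M_n\}_n$ solves it if each $M_n$ accepts every $x\in L^{(+)}_n$ and rejects every $x\in L^{(-)}_n$ (no uniformity is required). A 1dpda is a one-way deterministic pushdown automaton with state set $Q$, endmarked input, stack alphabet $\Gamma$ and push size $e$ (each move replaces the top stack symbol by a string in $\Gamma^{\le e}$), with accepting and rejecting halting states; its stack-state complexity is $|Q|+|\Gamma^{\le e}|$. $\mathrm{1DPD}$ is the class of families of promise problems solvable by families of 1dpda's whose stack-state complexity is bounded by a fixed polynomial in $n$. $\mathrm{1N}$ is the class of families of promise problems solvable by families of one-way nondeterministic finite automata whose number of states is bounded by a fixed polynomial in $n$. *)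

theory Defs
  imports Main
begin

datatype 'a tsym = Cent | Sym 'a | Dollar

definition tape :: "'a list \<Rightarrow> 'a tsym list" where
  "tape x = Cent # map Sym x @ [Dollar]"

text \<open>The transition function
  maps (state, tape symbol or None for a lambda-move, top stack symbol) to
  (new state, string replacing the top stack symbol). The top of the stack is
  the head of the list.\<close>
record dpda =
  dQ :: "nat set"
  dGam :: "nat set"
  dpush :: nat
  dq0 :: nat
  dZ0 :: nat
  dacc :: nat
  drej :: nat
  ddelta :: "nat \<Rightarrow> nat tsym option \<Rightarrow> nat \<Rightarrow> (nat \<times> nat list) option"

definition wf_dpda :: "dpda \<Rightarrow> bool" where
  "wf_dpda M \<longleftrightarrow>
     finite (dQ M) \<and> finite (dGam M) \<and>
     dq0 M \<in> dQ M \<and> dacc M \<in> dQ M \<and> drej M \<in> dQ M \<and> dacc M \<noteq> drej M \<and>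
     dZ0 M \<in> dGam M \<and>
     (\<forall>q s z q' w. ddelta M q s z = Some (q', w) \<longrightarrow>
        q \<in> dQ M \<and> q \<noteq> dacc M \<and> q \<noteq> drej M \<and> z \<in> dGam M \<and>
        q' \<in> dQ M \<and> set w \<subseteq> dGam M \<and> length w \<le> dpush M) \<and>
     (\<forall>q z. ddelta M q None z \<noteq> None \<longrightarrow> (\<forall>a. ddelta M q (Some a) z = None))"

text \<open>Configurations: (state, unread part of the endmarked input, stack).\<close>
inductive dstep :: "dpda \<Rightarrow> nat \<times> nat tsym list \<times> nat list \<Rightarrow> nat \<times> nat tsym list \<times> nat list \<Rightarrow> bool"
  for M where
  read: "ddelta M q (Some a) z = Some (q', w) \<Longrightarrow> dstep M (q, a # u, z # g) (q', u, w @ g)"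
| lam: "ddelta M q None z = Some (q', w) \<Longrightarrow> dstep M (q, u, z # g) (q', u, w @ g)"

definition dpda_accepts :: "dpda \<Rightarrow> nat list \<Rightarrow> bool" where
  "dpda_accepts M x \<longleftrightarrow>
     (\<exists>u g. (dstep M)\<^sup>*\<^sup>* (dq0 M, tape x, [dZ0 M]) (dacc M, u, g))"

definition dpda_rejects :: "dpda \<Rightarrow> nat list \<Rightarrow> bool" where
  "dpda_rejects M x \<longleftrightarrow>
     (\<exists>u g. (dstep M)\<^sup>*\<^sup>* (dq0 M, tape x, [dZ0 M]) (drej M, u, g))"

definition stack_state_complexity :: "dpda \<Rightarrow> nat" where
  "stack_state_complexity M =
     card (dQ M) + card {w. set w \<subseteq> dGam M \<and> length w \<le> dpush M}"

record nfa =
  nQ :: "nat set"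
  nq0 :: "nat"
  nF :: "nat set"
  ndelta :: "nat \<Rightarrow> nat tsym \<Rightarrow> nat set"

definition wf_nfa :: "nfa \<Rightarrow> bool" where
  "wf_nfa M \<longleftrightarrow> finite (nQ M) \<and> nq0 M \<in> nQ M \<and> nF M \<subseteq> nQ M \<and>
     (\<forall>q a. ndelta M q a \<subseteq> nQ M)"

fun nreach :: "nfa \<Rightarrow> nat \<Rightarrow> nat tsym list \<Rightarrow> nat set" where
  "nreach M q [] = {q}"
| "nreach M q (a # w) = (\<Union>q'\<in>ndelta M q a. nreach M q' w)"

definition nfa_accepts :: "nfa \<Rightarrow> nat list \<Rightarrow> bool" where
  "nfa_accepts M x \<longleftrightarrow> nreach M (nq0 M) (tape x) \<inter> nF M \<noteq> {}"

type_synonym promise_family = "nat \<Rightarrow> nat list set \<times> nat list set"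

definition promise_family_over :: "nat set \<Rightarrow> promise_family \<Rightarrow> bool" where
  "promise_family_over \<Sigma> L \<longleftrightarrow>
     (\<forall>n. fst (L n) \<subseteq> lists \<Sigma> \<and> snd (L n) \<subseteq> lists \<Sigma> \<and> fst (L n) \<inter> snd (L n) = {})"

definition in_1DPD :: "promise_family \<Rightarrow> bool" where
  "in_1DPD L \<longleftrightarrow> (\<exists>c k::nat. \<forall>n. \<exists>M. wf_dpda M \<and>
      stack_state_complexity M \<le> c * (n + 1) ^ k \<and>
      (\<forall>x\<in>fst (L n). dpda_accepts M x) \<and> (\<forall>x\<in>snd (L n). dpda_rejects M x))"

definition in_1N :: "promise_family \<Rightarrow> bool" where
  "in_1N L \<longleftrightarrow> (\<exists>c k::nat. \<forall>n. \<exists>M. wf_nfa M \<and>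
      card (nQ M) \<le> c * (n + 1) ^ k \<and>
      (\<forall>x\<in>fst (L n). nfa_accepts M x) \<and> (\<forall>x\<in>snd (L n). \<not> nfa_accepts M x))"

end

theory Submission
  imports Defs
begin

text \<open>A single non-regular promise problem, used for every \<open>n\<close>, already separates the
  classes: accept \<open>0\<^sup>m 1\<^sup>m\<close>, reject \<open>0\<^sup>m 1\<^sup>k\<close> with \<open>m < k\<close>. A 1dpda with three states and
  two stack symbols pushes one counter symbol per \<open>0\<close>, pops one per \<open>1\<close>, and rejects as
  soon as it reads a \<open>1\<close> on the bottom marker. An NFA accepting all \<open>0\<^sup>m 1\<^sup>m\<close> must reach
  the same state after two different prefixes \<open>\<cent>0\<^sup>a\<close> and \<open>\<cent>0\<^sup>b\<close> on accepting runs, so it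
  also accepts the crossed word \<open>0\<^sup>a 1\<^sup>b\<close> with \<open>a < b\<close>.\<close>

lemma nreach_append: "nreach M q (u @ v) = (\<Union>q'\<in>nreach M q u. nreach M q' v)"
  by (induction u arbitrary: q) auto

lemma nreach_subset_states:
  assumes "wf_nfa M" and "q \<in> nQ M"
  shows "nreach M q w \<subseteq> nQ M"
  using assms(2)
proof (induction w arbitrary: q)
  case (Cons a w)
  have "ndelta M q a \<subseteq> nQ M" using assms(1) unfolding wf_nfa_def by blast
  with Cons.IH show ?case by auto
qed simp

lemma nfa_fooling_pair:
  fixes u v :: "nat \<Rightarrow> nat tsym list"
  assumes wf: "wf_nfa M" and accepted: "\<And>m. nreach M (nq0 M) (u m @ v m) \<inter> nF M \<noteq> {}"
  shows "\<exists>a b. a < b \<and> nreach M (nq0 M) (u a @ v b) \<inter> nF M \<noteq> {}"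
proof -
  have "\<exists>q\<in>nreach M (nq0 M) (u m). nreach M q (v m) \<inter> nF M \<noteq> {}" for m
    using accepted[of m] by (auto simp: nreach_append)
  then obtain f where f_reach: "\<And>m. f m \<in> nreach M (nq0 M) (u m)"
    and f_accept: "\<And>m. nreach M (f m) (v m) \<inter> nF M \<noteq> {}"
    by metis
  have "range f \<subseteq> nQ M"
    using f_reach nreach_subset_states[OF wf] wf unfolding wf_nfa_def by blast
  then have "finite (range f)"
    using wf finite_subset unfolding wf_nfa_def by blast
  then have "\<not> inj f"
    using finite_imageD by blast
  then obtain a b where "a \<noteq> b" and same_state: "f a = f b"
    unfolding inj_def by blast
  have crossed: "nreach M (nq0 M) (u i @ v j) \<inter> nF M \<noteq> {}" if "f i = f j" for i j
    using f_reach[of i] f_accept[of j] that by (auto simp: nreach_append)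
  from \<open>a \<noteq> b\<close> have "a < b \<or> b < a"
    by arith
  then show ?thesis
    using crossed same_state by metis
qed

lemma nfa_accepts_unbalanced:
  assumes "wf_nfa M" and "\<And>m. nfa_accepts M (replicate m 0 @ replicate m 1)"
  shows "\<exists>m k. m < k \<and> nfa_accepts M (replicate m 0 @ replicate k 1)"
  using nfa_fooling_pair[of M "\<lambda>m. Cent # map Sym (replicate m 0)"
      "\<lambda>k. map Sym (replicate k 1) @ [Dollar]"] assms
  by (simp add: nfa_accepts_def tape_def)

text \<open>State \<open>0\<close> scans, \<open>1\<close> accepts, \<open>2\<close> rejects; stack symbol \<open>0\<close> is the bottom marker
  and \<open>1\<close> counts the zeros read so far.\<close>
definition counter_delta :: "nat \<Rightarrow> nat tsym option \<Rightarrow> nat \<Rightarrow> (nat \<times> nat list) option" where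
  "counter_delta q s z = (if q = 0 \<and> z \<le> 1 then
     (case s of
        Some Cent \<Rightarrow> Some (0, [z])
      | Some (Sym a) \<Rightarrow>
          if a = 0 then Some (0, [1, z])
          else if a = 1 then (if z = 1 then Some (0, []) else Some (2, [0]))
          else None
      | Some Dollar \<Rightarrow> Some (1, [z])
      | None \<Rightarrow> None)
   else None)"

definition counter_dpda :: dpda where
  "counter_dpda = \<lparr>dQ = {0, 1, 2}, dGam = {0, 1}, dpush = 2, dq0 = 0, dZ0 = 0,
     dacc = 1, drej = 2, ddelta = counter_delta\<rparr>"

lemma counter_delta_SomeD:
  assumes "counter_delta q s z = Some (q', w)"
  shows "q = 0 \<and> z \<in> {0, 1} \<and> q' \<in> {0, 1, 2} \<and> set w \<subseteq> {0, 1} \<and> length w \<le> 2"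
  using assms by (auto simp: counter_delta_def split: option.splits tsym.splits if_splits)

lemma wf_counter_dpda: "wf_dpda counter_dpda"
proof -
  have "\<forall>q s z q' w. counter_delta q s z = Some (q', w) \<longrightarrow>
      q \<in> {0, 1, 2} \<and> q \<noteq> 1 \<and> q \<noteq> 2 \<and> z \<in> {0, 1} \<and>
      q' \<in> {0, 1, 2} \<and> set w \<subseteq> {0, 1} \<and> length w \<le> 2"
    using counter_delta_SomeD by fastforce
  moreover have "\<forall>q z. counter_delta q None z = None"
    by (simp add: counter_delta_def)
  ultimately show ?thesis
    unfolding wf_dpda_def counter_dpda_def by simp blast
qed

lemma stack_state_complexity_counter_dpda: "stack_state_complexity counter_dpda = 10"
proof -
  have "card {w. set w \<subseteq> {0::nat, 1} \<and> length w \<le> 2} = (\<Sum>i\<le>2. card {0::nat, 1} ^ i)"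
    by (rule card_lists_length_le) simp
  also have "\<dots> = 7"
    by (simp add: numeral_2_eq_2)
  finally show ?thesis
    unfolding stack_state_complexity_def counter_dpda_def by simp
qed

lemma counter_dpda_step:
  assumes "counter_delta q (Some a) z = Some (q', w)"
  shows "dstep counter_dpda (q, a # u, z # g) (q', u, w @ g)"
  using dstep.read[of counter_dpda q a z q' w u g] assms by (simp add: counter_dpda_def)

lemma counter_dpda_push_zeros:
  assumes "z \<le> 1"
  shows "(dstep counter_dpda)\<^sup>*\<^sup>* (0, map Sym (replicate j 0) @ u, z # g)
           (0, u, replicate j 1 @ z # g)"
  using assms
proof (induction j arbitrary: z g)
  case (Suc j)
  have "dstep counter_dpda (0, map Sym (replicate (Suc j) 0) @ u, z # g)
          (0, map Sym (replicate j 0) @ u, 1 # z # g)"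
    using counter_dpda_step[of 0 "Sym 0" z 0 "[1, z]"] Suc.prems
    by (simp add: counter_delta_def)
  with Suc.IH[of 1 "z # g"] show ?case
    by (simp add: replicate_app_Cons_same converse_rtranclp_into_rtranclp)
qed simp

lemma counter_dpda_pop_ones:
  "(dstep counter_dpda)\<^sup>*\<^sup>* (0, map Sym (replicate j 1) @ u, replicate j 1 @ g) (0, u, g)"
proof (induction j)
  case (Suc j)
  have "dstep counter_dpda (0, map Sym (replicate (Suc j) 1) @ u, replicate (Suc j) 1 @ g)
          (0, map Sym (replicate j 1) @ u, replicate j 1 @ g)"
    using counter_dpda_step[of 0 "Sym 1" 1 0 "[]"] by (simp add: counter_delta_def)
  with Suc.IH show ?case
    by (simp add: converse_rtranclp_into_rtranclp)
qed simp

lemma counter_dpda_balanced_prefix: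
  "(dstep counter_dpda)\<^sup>*\<^sup>* (0, tape (replicate m 0 @ replicate m 1 @ x), [0])
     (0, map Sym x @ [Dollar], [0])"
proof -
  have "dstep counter_dpda (0, tape (replicate m 0 @ replicate m 1 @ x), [0])
          (0, map Sym (replicate m 0) @ map Sym (replicate m 1) @ map Sym x @ [Dollar], [0])"
    using counter_dpda_step[of 0 Cent 0 0 "[0]"] by (simp add: counter_delta_def tape_def)
  moreover have "(dstep counter_dpda)\<^sup>*\<^sup>*
      (0, map Sym (replicate m 0) @ map Sym (replicate m 1) @ map Sym x @ [Dollar], [0])
      (0, map Sym (replicate m 1) @ map Sym x @ [Dollar], replicate m 1 @ [0])"
    using counter_dpda_push_zeros[of 0] by simp
  ultimately show ?thesis
    using counter_dpda_pop_ones[of m "map Sym x @ [Dollar]" "[0]"]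
    by (meson converse_rtranclp_into_rtranclp rtranclp_trans)
qed

lemma counter_dpda_accepts: "dpda_accepts counter_dpda (replicate m 0 @ replicate m 1)"
proof -
  have "dstep counter_dpda (0, [Dollar], [0]) (1, [], [0])"
    using counter_dpda_step[of 0 Dollar 0 1 "[0]"] by (simp add: counter_delta_def)
  with counter_dpda_balanced_prefix[of m "[]"]
  have "(dstep counter_dpda)\<^sup>*\<^sup>* (0, tape (replicate m 0 @ replicate m 1), [0]) (1, [], [0])"
    by (simp add: rtranclp.rtrancl_into_rtrancl)
  then show ?thesis
    unfolding dpda_accepts_def by (auto simp: counter_dpda_def)
qed

lemma counter_dpda_rejects:
  assumes "m < k"
  shows "dpda_rejects counter_dpda (replicate m 0 @ replicate k 1)"
proof -
  obtain r where "k = m + Suc r"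
    using assms by (metis less_imp_Suc_add add_Suc_right)
  then have k: "replicate k 1 = replicate m 1 @ 1 # replicate r 1"
    by (simp only: replicate_add replicate_Suc)
  have "dstep counter_dpda (0, map Sym (1 # replicate r 1) @ [Dollar], [0])
          (2, map Sym (replicate r 1) @ [Dollar], [0])"
    using counter_dpda_step[of 0 "Sym 1" 0 2 "[0]"] by (simp add: counter_delta_def)
  with counter_dpda_balanced_prefix[of m "1 # replicate r 1"]
  have "(dstep counter_dpda)\<^sup>*\<^sup>* (0, tape (replicate m 0 @ replicate k 1), [0])
          (2, map Sym (replicate r 1) @ [Dollar], [0])"
    unfolding k by (simp add: rtranclp.rtrancl_into_rtrancl)
  then show ?thesis
    unfolding dpda_rejects_def by (auto simp: counter_dpda_def)
qed

definition equal_blocks_family :: promise_family where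
  "equal_blocks_family n =
     ({replicate m 0 @ replicate m 1 | m. True},
      {replicate m 0 @ replicate k 1 | m k. m < k})"

lemma replicate_append_replicate_inject:
  assumes "replicate i a @ replicate j b = replicate m a @ replicate k b" and "a \<noteq> b"
  shows "i = m \<and> j = k"
proof -
  have "length (filter ((=) c) (replicate i a @ replicate j b)) =
        length (filter ((=) c) (replicate m a @ replicate k b))" for c
    using assms(1) by simp
  from this[of a] this[of b] show ?thesis
    using assms(2) by (simp add: filter_replicate)
qed

lemma promise_family_over_equal_blocks: "promise_family_over {0, 1} equal_blocks_family"
proof -
  have "replicate j 0 @ replicate j 1 \<noteq> replicate m 0 @ replicate k (1::nat)" if "m < k" for j m k
  proof
    assume "replicate j 0 @ replicate j 1 = replicate m 0 @ replicate k (1::nat)"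
    then have "j = m \<and> j = k"
      by (rule replicate_append_replicate_inject) simp
    with that show False
      by simp
  qed
  then show ?thesis
    unfolding promise_family_over_def equal_blocks_family_def by auto
qed

lemma equal_blocks_family_in_1DPD: "in_1DPD equal_blocks_family"
  unfolding in_1DPD_def equal_blocks_family_def
  using wf_counter_dpda stack_state_complexity_counter_dpda counter_dpda_accepts counter_dpda_rejects
  by (intro exI[of _ 10] exI[of _ 0]) auto

lemma equal_blocks_family_not_in_1N: "\<not> in_1N equal_blocks_family"
proof
  assume "in_1N equal_blocks_family"
  then obtain M where wf: "wf_nfa M"
    and accepts: "\<forall>x\<in>fst (equal_blocks_family 0). nfa_accepts M x"
    and rejects: "\<forall>x\<in>snd (equal_blocks_family 0). \<not> nfa_accepts M x"
    unfolding in_1N_def by blast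
  obtain m k where "m < k" and "nfa_accepts M (replicate m 0 @ replicate k 1)"
    using nfa_accepts_unbalanced[OF wf] accepts unfolding equal_blocks_family_def by auto
  with rejects show False
    unfolding equal_blocks_family_def by auto
qed

theorem proposition5p1:
  shows "\<exists>(\<Sigma>::nat set) L. finite \<Sigma> \<and> \<Sigma> \<noteq> {} \<and> promise_family_over \<Sigma> L \<and>
           in_1DPD L \<and> \<not> in_1N L"
proof (intro exI conjI)
  show "finite {0::nat, 1}" and "{0::nat, 1} \<noteq> {}"
    by simp_all
qed (fact promise_family_over_equal_blocks equal_blocks_family_in_1DPD
      equal_blocks_family_not_in_1N)+

end
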